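(* Consider the lasso problem $\min_{\boldsymbol\beta\in\mathbb{R}^p}\frac{1}{2n}\|\mathbf{y}-\mathbf{X}\boldsymbol\beta\|^2+\lambda\|\boldsymbol\beta\|_1$ at a given $\lambda$, and suppose it is strictly convex, so that the sequence of iterates produced by an iterative algorithm $a(\cdot)$ (such as coordinate descent) converges to the unique global optimum $\widehat{\boldsymbol\beta}(\lambda)$. Then the algorithm $a(\cdot)$ combined with hybrid safe-strong rule (HSSR) screening converges to the same solution $\widehat{\boldsymbol\beta}(\lambda)$.
   Context: Here $\mathbf{y}\in\mathbb{R}^n$, $\mathbf{X}=(\mathbf{x}_1,\ldots,\mathbf{x}_p)\in\mathbb{R}^{n\times p}$, $\|\cdot\|$ is the Euclidean norm and $\|\cdot\|_1$ the $\ell_1$ norm. The lasso is solved over a decreasing sequence $\lambda_1>\lambda_2>\cdots>\lambda_K$, and $\widehat{\boldsymbol\beta}(\lambda_k)$ is the solution at $\lambda_k$, with residual $\mathbf{r}(\lambda_k)=\mathbf{y}-\mathbf{X}\widehat{\boldsymbol\beta}(\lambda_k)$. A safe rule is a screening rule that only discards features $j$ for which $\widehat{\beta}_j(\lambda_{k+1})=0$ is guaranteed; let $\mathcal{S}_{k+1}$ (the safe set) be the set of features not discarded by the safe rule at $\lambda_{k+1}$. The hybrid safe-strong rule (HSSR) discards feature $j$ at $\lambda_{k+1}$ if $j\in\mathcal{S}_{k+1}^c\cup\{j\in\mathcal{S}_{k+1}:|\mathbf{x}_j^T\mathbf{r}(\lambda_k)|/n<2\lambda_{k+1}-\lambda_k\}$.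 Running an algorithm with HSSR screening means: the algorithm is run only over the features not discarded by HSSR; after convergence, the KKT conditions of the lasso ($\mathbf{x}_j^T\mathbf{r}(\lambda)/n=\lambda\,\mathrm{sign}(\widehat\beta_j)$ if $\widehat\beta_j\neq0$, $|\mathbf{x}_j^T\mathbf{r}(\lambda)/n|\le\lambda$ if $\widehat\beta_j=0$) are checked for the features in the safe set that were discarded by the strong-rule part; any violating features are added back and the algorithm is rerun (warm-started), repeating until no violations occur. *)

theory Defs
  imports "HOL-Analysis.Analysis"
begin

text \<open>Design matrix X has n rows (observations, index type 'n) and p columns
  (features, index type 'p); y :: real^'n; beta :: real^'p.  n = CARD('n).\<close>

definition strict_convex_on :: "'a::real_vector set \<Rightarrow> ('a \<Rightarrow> real) \<Rightarrow> bool" where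
  "strict_convex_on S f \<longleftrightarrow>
     (\<forall>x\<in>S. \<forall>y\<in>S. x \<noteq> y \<longrightarrow> (\<forall>u>0. \<forall>v>0. u + v = 1 \<longrightarrow>
        f (u *\<^sub>R x + v *\<^sub>R y) < u * f x + v * f y))"

definition l1norm :: "real^'p \<Rightarrow> real" where
  "l1norm b = (\<Sum>j\<in>UNIV. \<bar>b $ j\<bar>)"

definition lasso_obj :: "real^'p^'n \<Rightarrow> real^'n \<Rightarrow> real \<Rightarrow> real^'p \<Rightarrow> real" where
  "lasso_obj X y lam b =
     (1 / (2 * real CARD('n))) * (norm (y - X *v b))^2 + lam * l1norm b"

definition restricted_lasso_min :: "real^'p^'n \<Rightarrow> real^'n \<Rightarrow> real \<Rightarrow> 'p set \<Rightarrow> real^'p \<Rightarrow> bool" where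
  "restricted_lasso_min X y lam A b \<longleftrightarrow>
     (\<forall>j. j \<notin> A \<longrightarrow> b $ j = 0) \<and>
     (\<forall>c. (\<forall>j. j \<notin> A \<longrightarrow> c $ j = 0) \<longrightarrow> lasso_obj X y lam b \<le> lasso_obj X y lam c)"

definition lasso_min :: "real^'p^'n \<Rightarrow> real^'n \<Rightarrow> real \<Rightarrow> real^'p \<Rightarrow> bool" where
  "lasso_min X y lam b \<longleftrightarrow> (\<forall>c. lasso_obj X y lam b \<le> lasso_obj X y lam c)"

definition residual :: "real^'p^'n \<Rightarrow> real^'n \<Rightarrow> real^'p \<Rightarrow> real^'n" where
  "residual X y b = y - X *v b"

definition corr :: "real^'p^'n \<Rightarrow> real^'n \<Rightarrow> 'p \<Rightarrow> real" where
  "corr X r j = (column j X \<bullet> r) / real CARD('n)"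

definition kkt_ok :: "real^'p^'n \<Rightarrow> real^'n \<Rightarrow> real \<Rightarrow> real^'p \<Rightarrow> 'p \<Rightarrow> bool" where
  "kkt_ok X y lam b j \<longleftrightarrow>
     (if b $ j \<noteq> 0 then corr X (residual X y b) j = lam * sgn (b $ j)
      else \<bar>corr X (residual X y b) j\<bar> \<le> lam)"

definition safe_set :: "real^'p^'n \<Rightarrow> real^'n \<Rightarrow> real \<Rightarrow> 'p set \<Rightarrow> bool" where
  "safe_set X y lam S \<longleftrightarrow> (\<forall>b. lasso_min X y lam b \<longrightarrow> (\<forall>j. j \<notin> S \<longrightarrow> b $ j = 0))"

text \<open>Features kept by HSSR at lam (= lambda_{k+1}), given the safe set S, the previous
  value lam_prev (= lambda_k) and the previous solution b_prev.\<close>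
definition hssr_kept :: "real^'p^'n \<Rightarrow> real^'n \<Rightarrow> real \<Rightarrow> real \<Rightarrow> real^'p \<Rightarrow> 'p set \<Rightarrow> 'p set" where
  "hssr_kept X y lam lam_prev b_prev S =
     {j \<in> S. \<not> (\<bar>corr X (residual X y b_prev) j\<bar> < 2 * lam - lam_prev)}"

definition kkt_violators :: "real^'p^'n \<Rightarrow> real^'n \<Rightarrow> real \<Rightarrow> 'p set \<Rightarrow> 'p set \<Rightarrow> real^'p \<Rightarrow> 'p set" where
  "kkt_violators X y lam S A b = {j \<in> S - A. \<not> kkt_ok X y lam b j}"

text \<open>The algorithm a A w: iterates of the algorithm run only over the features in A,
  warm-started at w.  State m of HSSR-screened algorithm: (active set, converged value).\<close>
fun hssr_state ::
  "('p set \<Rightarrow> real^'p \<Rightarrow> nat \<Rightarrow> real^'p) \<Rightarrow> real^'p^'n \<Rightarrow> real^'n \<Rightarrow> real \<Rightarrow> 'p set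
     \<Rightarrow> 'p set \<Rightarrow> real^'p \<Rightarrow> nat \<Rightarrow> 'p set \<times> (real^'p)" where
  "hssr_state a X y lam S A0 w0 0 = (A0, lim (a A0 w0))"
| "hssr_state a X y lam S A0 w0 (Suc m) =
     (let (A, b) = hssr_state a X y lam S A0 w0 m;
          A' = A \<union> kkt_violators X y lam S A b
      in (A', lim (a A' b)))"

end

theory Submission
  imports Defs
begin

text \<open>Each run of the algorithm converges to the lasso minimiser restricted to the current
  active set, and by the KKT conditions such a minimiser satisfies them on that set. Every
  rerun strictly enlarges the active set inside the finite safe set, so after finitely many
  reruns no feature of the safe set violates the KKT conditions. Since the lasso objective is
  convex, KKT on the safe set makes the iterate the minimiser over vectors supported on the
  safe set; the safe rule guarantees that the global minimiser is among them, and strict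
  convexity makes the two coincide.\<close>

lemma inner_matrix_vector_mult_columns:
  fixes X :: "real^'p^'n"
  shows "(X *v d) \<bullet> r = (\<Sum>j\<in>UNIV. d $ j * (column j X \<bullet> r))"
proof -
  have "(X *v d) \<bullet> r = (\<Sum>i\<in>UNIV. \<Sum>j\<in>UNIV. X$i$j * d$j * r$i)"
    by (simp add: inner_vec_def matrix_vector_mult_def sum_distrib_right)
  also have "\<dots> = (\<Sum>j\<in>UNIV. \<Sum>i\<in>UNIV. X$i$j * d$j * r$i)" by (rule sum.swap)
  also have "\<dots> = (\<Sum>j\<in>UNIV. d $ j * (column j X \<bullet> r))"
    by (simp add: inner_vec_def column_def sum_distrib_left mult_ac)
  finally show ?thesis .
qed

lemma lasso_obj_expansion:
  fixes X :: "real^'p^'n"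
  shows "lasso_obj X y lam c = lasso_obj X y lam b
    + (\<Sum>j\<in>UNIV. lam * (\<bar>c$j\<bar> - \<bar>b$j\<bar>) - corr X (residual X y b) j * (c$j - b$j))
    + (norm (X *v (c - b)))^2 / (2 * real CARD('n))"
proof -
  define r where "r = residual X y b"
  define d where "d = c - b"
  have "y - X *v c = r - X *v d"
    unfolding r_def d_def residual_def by (simp add: algebra_simps)
  moreover have "(norm (r - X *v d))^2 = (norm r)^2 - 2 * ((X *v d) \<bullet> r) + (norm (X *v d))^2"
    by (simp add: power2_norm_eq_inner inner_diff inner_commute)
  moreover have "(\<Sum>j\<in>UNIV. lam * (\<bar>c$j\<bar> - \<bar>b$j\<bar>) - corr X r j * (c$j - b$j))
     = lam * l1norm c - lam * l1norm b - ((X *v d) \<bullet> r) / real CARD('n)"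
    unfolding l1norm_def corr_def inner_matrix_vector_mult_columns d_def
    by (simp add: sum_subtractf sum_distrib_left sum_divide_distrib right_diff_distrib
        diff_divide_distrib mult_ac)
  ultimately show ?thesis
    unfolding lasso_obj_def r_def[symmetric] d_def[symmetric]
    by (simp add: field_simps r_def residual_def)
qed

lemma continuous_on_lasso_obj: "continuous_on UNIV (lasso_obj X y lam)"
  unfolding lasso_obj_def l1norm_def
  by (intro continuous_intros linear_continuous_on matrix_vector_mul_bounded_linear)

lemma le_of_local_quadratic_bound:
  fixes c e K \<delta> :: real
  assumes "0 < \<delta>" "0 \<le> K" and bound: "\<And>t. 0 < t \<Longrightarrow> t < \<delta> \<Longrightarrow> c * t \<le> K * t^2 + e * t"
  shows "c \<le> e"
proof (rule ccontr)
  assume "\<not> c \<le> e"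
  define t where "t = min (\<delta> / 2) ((c - e) / (K + 1))"
  have t: "0 < t" "t < \<delta>" "t \<le> (c - e) / (K + 1)"
    using assms \<open>\<not> c \<le> e\<close> by (auto simp: t_def)
  from bound[OF t(1,2)] have "(c - e) * t \<le> (K * t) * t"
    by (simp add: power2_eq_square algebra_simps)
  hence "c - e \<le> K * t" using t(1) by (rule mult_right_le_imp_le)
  also have "\<dots> \<le> K * ((c - e) / (K + 1))" using t(3) assms(2) by (rule mult_left_mono)
  also have "\<dots> < c - e" using assms(2) \<open>\<not> c \<le> e\<close> by (simp add: field_simps)
  finally show False by simp
qed

text \<open>The scalar KKT condition says that \<open>c\<close> is a subgradient of \<open>lam \<bar>_\<bar>\<close> at \<open>\<beta>\<close>.\<close>

lemma scalar_kkt_of_quadratic_bound: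
  fixes K lam c \<beta> :: real
  assumes K: "0 \<le> K"
    and bound: "\<And>t. c * t \<le> K * t^2 + lam * (\<bar>\<beta> + t\<bar> - \<bar>\<beta>\<bar>)"
  shows "if \<beta> \<noteq> 0 then c = lam * sgn \<beta> else \<bar>c\<bar> \<le> lam"
proof -
  text \<open>Near \<open>t = 0\<close> the term \<open>\<bar>\<beta> + t\<bar> - \<bar>\<beta>\<bar>\<close> is linear on each side, so testing
    \<open>t\<close> and \<open>-t\<close> bounds \<open>c\<close> from above and below.\<close>
  define \<delta> where "\<delta> = (if \<beta> = 0 then 1 else \<bar>\<beta>\<bar>)"
  have \<delta>: "0 < \<delta>" by (simp add: \<delta>_def)
  have "c * t \<le> K * t^2 + (if \<beta> < 0 then - lam else lam) * t" if "0 < t" "t < \<delta>" for t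
    using bound[of t] that by (auto simp: \<delta>_def split: if_splits)
  hence right: "c \<le> (if \<beta> < 0 then - lam else lam)"
    by (rule le_of_local_quadratic_bound[OF \<delta> K])
  have "(- c) * t \<le> K * t^2 + (if \<beta> > 0 then - lam else lam) * t" if "0 < t" "t < \<delta>" for t
    using bound[of "- t"] that by (auto simp: \<delta>_def split: if_splits)
  hence left: "- c \<le> (if \<beta> > 0 then - lam else lam)"
    by (rule le_of_local_quadratic_bound[OF \<delta> K])
  show ?thesis using right left by (auto simp: sgn_if split: if_splits)
qed

lemma scalar_kkt_imp_subgradient_ineq:
  fixes lam c \<beta> x :: real
  assumes lam: "0 \<le> lam"
    and kkt: "if \<beta> \<noteq> 0 then c = lam * sgn \<beta> else \<bar>c\<bar> \<le> lam"
  shows "c * (x - \<beta>) \<le> lam * (\<bar>x\<bar> - \<bar>\<beta>\<bar>)"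
proof (cases "\<beta> = 0")
  case True
  hence "\<bar>c\<bar> \<le> lam" using kkt by simp
  have "c * x \<le> \<bar>c\<bar> * \<bar>x\<bar>" by (metis abs_ge_self abs_mult)
  also have "\<dots> \<le> lam * \<bar>x\<bar>" using \<open>\<bar>c\<bar> \<le> lam\<close> by (rule mult_right_mono) simp
  finally show ?thesis using True by simp
next
  case False
  hence "c * (x - \<beta>) = lam * (sgn \<beta> * x - \<bar>\<beta>\<bar>)"
    using kkt by (simp add: abs_sgn algebra_simps)
  also have "\<dots> \<le> lam * (\<bar>x\<bar> - \<bar>\<beta>\<bar>)"
    by (rule mult_left_mono) (use lam in \<open>auto simp: sgn_if\<close>)
  finally show ?thesis .
qed

lemma restricted_lasso_min_imp_kkt_ok:
  fixes X :: "real^'p^'n"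
  assumes min: "restricted_lasso_min X y lam A b" and "j \<in> A"
  shows "kkt_ok X y lam b j"
proof -
  define K where "K = (norm (column j X))^2 / (2 * real CARD('n))"
  define cr where "cr = corr X (residual X y b) j"
  have "cr * t \<le> K * t^2 + lam * (\<bar>b$j + t\<bar> - \<bar>b$j\<bar>)" for t
  proof -
    define c where "c = b + t *\<^sub>R axis j 1"
    have "\<forall>i. i \<notin> A \<longrightarrow> c $ i = 0"
      using min \<open>j \<in> A\<close> unfolding restricted_lasso_min_def c_def by (auto simp: axis_def)
    hence "lasso_obj X y lam b \<le> lasso_obj X y lam c"
      using min unfolding restricted_lasso_min_def by blast
    moreover have "(\<Sum>i\<in>UNIV. lam * (\<bar>c$i\<bar> - \<bar>b$i\<bar>) - corr X (residual X y b) i * (c$i - b$i))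
       = (\<Sum>i\<in>UNIV. if i = j then lam * (\<bar>b$j + t\<bar> - \<bar>b$j\<bar>) - cr * t else 0)"
      by (rule sum.cong) (auto simp: c_def axis_def cr_def)
    moreover have "(norm (X *v (c - b)))^2 / (2 * real CARD('n)) = K * t^2"
      by (simp add: c_def matrix_vector_mult_scaleR matrix_vector_mult_basis K_def
          power_mult_distrib)
    ultimately show ?thesis using lasso_obj_expansion[of X y lam c b] by simp
  qed
  hence "if b $ j \<noteq> 0 then cr = lam * sgn (b $ j) else \<bar>cr\<bar> \<le> lam"
    by (rule scalar_kkt_of_quadratic_bound[rotated]) (simp add: K_def)
  thus ?thesis unfolding kkt_ok_def cr_def .
qed

lemma kkt_ok_imp_restricted_lasso_min:
  fixes X :: "real^'p^'n"
  assumes lam: "0 \<le> lam" and supp: "\<forall>j. j \<notin> S \<longrightarrow> b $ j = 0"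
    and kkt: "\<forall>j\<in>S. kkt_ok X y lam b j"
  shows "restricted_lasso_min X y lam S b"
  unfolding restricted_lasso_min_def
proof (intro conjI allI impI)
  fix j assume "j \<notin> S" thus "b $ j = 0" using supp by simp
next
  fix c :: "real^'p" assume c: "\<forall>j. j \<notin> S \<longrightarrow> c $ j = 0"
  have "corr X (residual X y b) j * (c$j - b$j) \<le> lam * (\<bar>c$j\<bar> - \<bar>b$j\<bar>)" for j
  proof (cases "j \<in> S")
    case True
    thus ?thesis using kkt scalar_kkt_imp_subgradient_ineq[OF lam] unfolding kkt_ok_def by blast
  qed (use c supp in simp)
  hence "0 \<le> (\<Sum>j\<in>UNIV. lam * (\<bar>c$j\<bar> - \<bar>b$j\<bar>) - corr X (residual X y b) j * (c$j - b$j))"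
    by (simp add: sum_nonneg)
  moreover have "0 \<le> (norm (X *v (c - b)))^2 / (2 * real CARD('n))" by simp
  ultimately show "lasso_obj X y lam b \<le> lasso_obj X y lam c"
    using lasso_obj_expansion[of X y lam c b] by linarith
qed

lemma restricted_lasso_min_exists:
  fixes X :: "real^'p^'n"
  assumes lam: "0 < lam"
  obtains b where "restricted_lasso_min X y lam A b"
proof -
  define f where "f = lasso_obj X y lam"
  text \<open>A sublevel set within the coordinate subspace; it is bounded because
    \<open>lam \<parallel>c\<parallel>\<^sub>1 \<le> f c\<close>.\<close>
  define K where "K = (\<Inter>j\<in>-A. {c::real^'p. c $ j = 0}) \<inter> {c. f c \<le> f 0}"
  have cont: "continuous_on UNIV f" unfolding f_def by (rule continuous_on_lasso_obj)
  have "closed K" unfolding K_def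
    by (intro closed_Int closed_INT ballI closed_Collect_eq closed_Collect_le cont continuous_intros)
  moreover have "bounded K" unfolding bounded_iff
  proof (intro exI ballI)
    fix c assume "c \<in> K"
    hence "f c \<le> f 0" by (simp add: K_def)
    moreover have "lam * l1norm c \<le> f c" by (simp add: f_def lasso_obj_def)
    ultimately have "lam * l1norm c \<le> f 0" by linarith
    hence "l1norm c \<le> f 0 / lam" using lam by (simp add: field_simps)
    thus "norm c \<le> f 0 / lam" using norm_le_l1_cart[of c] unfolding l1norm_def by linarith
  qed
  ultimately have "compact K" by (simp add: compact_eq_bounded_closed)
  moreover have "0 \<in> K" by (simp add: K_def)
  ultimately obtain b where b: "b \<in> K" and bmin: "\<forall>c\<in>K. f b \<le> f c"
    using continuous_attains_inf[of K f] continuous_on_subset[OF cont] by blast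
  have "restricted_lasso_min X y lam A b"
    unfolding restricted_lasso_min_def
  proof (intro conjI allI impI)
    fix j assume "j \<notin> A" thus "b $ j = 0" using b by (auto simp: K_def)
  next
    fix c :: "real^'p" assume c: "\<forall>j. j \<notin> A \<longrightarrow> c $ j = 0"
    have "f b \<le> f 0" using b by (simp add: K_def)
    moreover have "f b \<le> f c" if "f c \<le> f 0"
      using bmin c that by (auto simp: K_def)
    ultimately show "lasso_obj X y lam b \<le> lasso_obj X y lam c"
      unfolding f_def by linarith
  qed
  thus thesis by (rule that)
qed

lemma restricted_lasso_min_unique:
  fixes X :: "real^'p^'n"
  assumes strict: "strict_convex_on UNIV (lasso_obj X y lam)"
    and b1: "restricted_lasso_min X y lam A b1" and b2: "restricted_lasso_min X y lam A b2"
  shows "b1 = b2"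
proof (rule ccontr)
  assume "b1 \<noteq> b2"
  define m where "m = (1/2::real) *\<^sub>R b1 + (1/2::real) *\<^sub>R b2"
  have "\<forall>u>0. \<forall>v>0. u + v = 1 \<longrightarrow> lasso_obj X y lam (u *\<^sub>R b1 + v *\<^sub>R b2)
      < u * lasso_obj X y lam b1 + v * lasso_obj X y lam b2"
    using strict \<open>b1 \<noteq> b2\<close> unfolding strict_convex_on_def by blast
  from this[rule_format, of "1/2" "1/2"]
  have "lasso_obj X y lam m < (1/2) * lasso_obj X y lam b1 + (1/2) * lasso_obj X y lam b2"
    unfolding m_def by simp
  moreover have "\<forall>j. j \<notin> A \<longrightarrow> m $ j = 0"
    using b1 b2 unfolding restricted_lasso_min_def m_def by simp
  hence "lasso_obj X y lam b1 \<le> lasso_obj X y lam m"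
    using b1 unfolding restricted_lasso_min_def by blast
  moreover have "lasso_obj X y lam b1 = lasso_obj X y lam b2"
    using b1 b2 unfolding restricted_lasso_min_def by (blast intro: order_antisym)
  ultimately show False by simp
qed

lemma safe_set_imp_restricted_lasso_min:
  assumes "safe_set X y lam S" and "lasso_min X y lam b"
  shows "restricted_lasso_min X y lam S b"
  using assms unfolding safe_set_def restricted_lasso_min_def lasso_min_def by blast

lemma lim_restricted_lasso_min:
  fixes X :: "real^'p^'n"
  assumes lam: "0 < lam"
    and conv: "\<And>A w b. restricted_lasso_min X y lam A b \<Longrightarrow> a A w \<longlonglongrightarrow> b"
  shows "restricted_lasso_min X y lam A (lim (a A w))"
proof -
  obtain b where b: "restricted_lasso_min X y lam A b"
    using restricted_lasso_min_exists[OF lam] .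
  hence "lim (a A w) = b" by (intro limI conv)
  thus ?thesis using b by simp
qed

lemma hssr_state_Suc:
  "hssr_state a X y lam S A0 w0 (Suc m) =
    (fst (hssr_state a X y lam S A0 w0 m) \<union>
       kkt_violators X y lam S (fst (hssr_state a X y lam S A0 w0 m)) (snd (hssr_state a X y lam S A0 w0 m)),
     lim (a (fst (hssr_state a X y lam S A0 w0 m) \<union>
       kkt_violators X y lam S (fst (hssr_state a X y lam S A0 w0 m)) (snd (hssr_state a X y lam S A0 w0 m)))
       (snd (hssr_state a X y lam S A0 w0 m))))"
  by (simp add: Let_def split_beta)

lemma hssr_state_restricted_lasso_min:
  assumes "A0 \<subseteq> S"
    and lim_min: "\<And>A w. restricted_lasso_min X y lam A (lim (a A w))"
  shows "fst (hssr_state a X y lam S A0 w0 m) \<subseteq> S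
    \<and> restricted_lasso_min X y lam (fst (hssr_state a X y lam S A0 w0 m)) (snd (hssr_state a X y lam S A0 w0 m))"
proof (induction m)
  case 0
  show ?case using assms by simp
next
  case (Suc m)
  thus ?case using lim_min unfolding hssr_state_Suc by (auto simp: kkt_violators_def)
qed

lemma hssr_state_card_active:
  fixes X :: "real^'p^'n" and y :: "real^'n" and lam :: real and S A0 :: "'p set" and w0 :: "real^'p"
    and a :: "'p set \<Rightarrow> real^'p \<Rightarrow> nat \<Rightarrow> real^'p"
  defines "V \<equiv> \<lambda>m. kkt_violators X y lam S (fst (hssr_state a X y lam S A0 w0 m))
                                          (snd (hssr_state a X y lam S A0 w0 m))"
  assumes "\<forall>m'<m. V m' \<noteq> {}"
  shows "m \<le> card (fst (hssr_state a X y lam S A0 w0 m))"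
  using assms(2)
proof (induction m)
  case (Suc m)
  let ?A = "fst (hssr_state a X y lam S A0 w0 m)"
  have active: "fst (hssr_state a X y lam S A0 w0 (Suc m)) = ?A \<union> V m"
    unfolding hssr_state_Suc V_def by simp
  have "card (?A \<union> V m) = card ?A + card (V m)"
    by (rule card_Un_disjoint) (auto simp: V_def kkt_violators_def)
  moreover have "1 \<le> card (V m)"
    using Suc.prems by (simp add: Suc_le_eq card_gt_0_iff)
  ultimately show ?case
    unfolding active using Suc.IH Suc.prems by simp
qed simp

lemma hssr_state_terminates:
  fixes X :: "real^'p^'n"
  shows "\<exists>m. kkt_violators X y lam S (fst (hssr_state a X y lam S A0 w0 m))
                                      (snd (hssr_state a X y lam S A0 w0 m)) = {}"
proof (rule ccontr)
  assume "\<not> ?thesis"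
  hence "Suc CARD('p) \<le> card (fst (hssr_state a X y lam S A0 w0 (Suc CARD('p))))"
    by (intro hssr_state_card_active) auto
  moreover have "card (fst (hssr_state a X y lam S A0 w0 (Suc CARD('p)))) \<le> CARD('p)"
    by (rule card_mono) auto
  ultimately show False by simp
qed

lemma restricted_lasso_min_without_violators:
  fixes X :: "real^'p^'n"
  assumes lam: "0 \<le> lam" and "A \<subseteq> S"
    and min: "restricted_lasso_min X y lam A b" and "kkt_violators X y lam S A b = {}"
  shows "restricted_lasso_min X y lam S b"
proof (rule kkt_ok_imp_restricted_lasso_min[OF lam])
  show "\<forall>j. j \<notin> S \<longrightarrow> b $ j = 0"
    using min \<open>A \<subseteq> S\<close> unfolding restricted_lasso_min_def by blast
  show "\<forall>j\<in>S. kkt_ok X y lam b j"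
    using restricted_lasso_min_imp_kkt_ok[OF min] \<open>kkt_violators X y lam S A b = {}\<close>
    by (auto simp: kkt_violators_def)
qed

theorem theorem3p1:
  fixes X :: "real^'p^'n" and y :: "real^'n"
    and lam lam_prev :: real
    and b_prev bhat :: "real^'p"
    and S :: "'p set"
    and a :: "'p set \<Rightarrow> real^'p \<Rightarrow> nat \<Rightarrow> real^'p"
  assumes lam_pos: "0 < lam" and lam_lt: "lam < lam_prev"
    and strict: "strict_convex_on UNIV (lasso_obj X y lam)"
    and prev: "lasso_min X y lam_prev b_prev"
    and bhat: "lasso_min X y lam bhat"
    and safe: "safe_set X y lam S"
    and alg_conv: "\<And>A w b. restricted_lasso_min X y lam A b \<Longrightarrow> a A w \<longlonglongrightarrow> b"
  shows "\<exists>m. (\<forall>m'<m. kkt_violators X y lam S (fst (hssr_state a X y lam S (hssr_kept X y lam lam_prev b_prev S) b_prev m'))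
                                        (snd (hssr_state a X y lam S (hssr_kept X y lam lam_prev b_prev S) b_prev m')) \<noteq> {})
           \<and> kkt_violators X y lam S (fst (hssr_state a X y lam S (hssr_kept X y lam lam_prev b_prev S) b_prev m))
                                        (snd (hssr_state a X y lam S (hssr_kept X y lam lam_prev b_prev S) b_prev m)) = {}
           \<and> snd (hssr_state a X y lam S (hssr_kept X y lam lam_prev b_prev S) b_prev m) = bhat"
proof -
  text \<open>The screening only fixes the initial active set inside \<open>S\<close>.\<close>
  define st where "st = hssr_state a X y lam S (hssr_kept X y lam lam_prev b_prev S) b_prev"
  define V where "V = (\<lambda>m. kkt_violators X y lam S (fst (st m)) (snd (st m)))"
  obtain m where stop: "V m = {}" and before: "\<forall>m'<m. V m' \<noteq> {}"
    using hssr_state_terminates exists_least_iff[of "\<lambda>m. V m = {}"]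
    unfolding V_def st_def by metis
  have "hssr_kept X y lam lam_prev b_prev S \<subseteq> S" by (auto simp: hssr_kept_def)
  moreover have "restricted_lasso_min X y lam A (lim (a A w))" for A w
    by (rule lim_restricted_lasso_min[OF lam_pos alg_conv])
  ultimately have "fst (st m) \<subseteq> S \<and> restricted_lasso_min X y lam (fst (st m)) (snd (st m))"
    unfolding st_def by (rule hssr_state_restricted_lasso_min)
  hence "restricted_lasso_min X y lam S (snd (st m))"
    using restricted_lasso_min_without_violators[OF less_imp_le[OF lam_pos]] stop
    unfolding V_def by blast
  moreover have "restricted_lasso_min X y lam S bhat"
    using safe bhat by (rule safe_set_imp_restricted_lasso_min)
  ultimately have "snd (st m) = bhat" by (rule restricted_lasso_min_unique[OF strict])
  thus ?thesis using stop before unfolding V_def st_def by blast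
qed

end
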